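(* Let $m\le n$, let $A\in\mathbb{C}^{m\times n}$ have rank $m$, and let $G\le\mathrm{SL}_m(\mathbb{C})$ be a symmetric subgroup with $K=G\cap\mathrm{SU}_m$. Let $C_A(KX)=\log\kappa_F(XA)$. Then for every $X\in G$ and $H\in i\mathrm{Lie}(K)$, with $P=XAA^*X^*$, $$\tfrac12\langle H,\nabla^2C_A(KX)H\rangle=\frac{\mathrm{tr}(H^2P)}{\mathrm{tr}(P)}-\frac{\mathrm{tr}(HP)^2}{\mathrm{tr}(P)^2}+\frac{\mathrm{tr}(H^2P^{-1})}{\mathrm{tr}(P^{-1})}-\frac{\mathrm{tr}(HP^{-1})^2}{\mathrm{tr}(P^{-1})^2}.$$ Moreover, on the sublevel set $S=\{KX\in G/K: C_A(KX)\le C_A(K)\}$, the smallest eigenvalue of $\nabla^2C_A(KX)$ is at least $4/\kappa_F(A)^2$.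
   Context: $\kappa_F(B)=\|B\|_F\|B^\dagger\|_F$ with $^\dagger$ the Moore–Penrose pseudoinverse. Symmetric subgroup: Zariski closed and closed under conjugate transposition. $i\mathrm{Lie}(K)$: Hermitian $H$ with $e^{tH}\in G$ for all $t\in\mathbb{R}$, with inner product $\langle H,H'\rangle=\mathrm{Re}\,\mathrm{tr}(H^*H')$. $G/K$: right cosets. Hessian: $\nabla^2f(KX)$ is the self-adjoint operator on $i\mathrm{Lie}(K)$ with $\langle H,\nabla^2f(KX)H\rangle=\frac{d^2}{dt^2}|_{t=0}f(Ke^{tH}X)$. *)

theory Defs
  imports "HOL-Analysis.Analysis"
begin

type_synonym ('r,'c) cmat = "complex^'c^'r"

definition ctransp :: "complex^'c^'r \<Rightarrow> complex^'r^'c" where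
  "ctransp M = (\<chi> i j. cnj (M $ j $ i))"

definition frob :: "complex^'c^'r \<Rightarrow> real" where
  "frob M = sqrt (\<Sum>i\<in>UNIV. \<Sum>j\<in>UNIV. (cmod (M $ i $ j))\<^sup>2)"

definition is_pinv :: "complex^'c^'r \<Rightarrow> complex^'r^'c \<Rightarrow> bool" where
  "is_pinv M B \<longleftrightarrow> M ** B ** M = M \<and> B ** M ** B = B \<and>
     ctransp (M ** B) = M ** B \<and> ctransp (B ** M) = B ** M"

definition pinv :: "complex^'c^'r \<Rightarrow> complex^'r^'c" where
  "pinv M = (THE B. is_pinv M B)"

definition kappaF :: "complex^'c^'r \<Rightarrow> real" where
  "kappaF B = frob B * frob (pinv B)"

fun mpow :: "complex^'n^'n \<Rightarrow> nat \<Rightarrow> complex^'n^'n" where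
  "mpow M 0 = mat 1"
| "mpow M (Suc k) = M ** mpow M k"

definition mexp :: "complex^'n^'n \<Rightarrow> complex^'n^'n" where
  "mexp M = (\<Sum>k. (1 / fact k) *\<^sub>R mpow M k)"

inductive_set polyfun :: "(complex^'n^'n \<Rightarrow> complex) set" where
  const: "(\<lambda>X. c) \<in> polyfun"
| coord: "(\<lambda>X. X $ i $ j) \<in> polyfun"
| add: "p \<in> polyfun \<Longrightarrow> q \<in> polyfun \<Longrightarrow> (\<lambda>X. p X + q X) \<in> polyfun"
| mult: "p \<in> polyfun \<Longrightarrow> q \<in> polyfun \<Longrightarrow> (\<lambda>X. p X * q X) \<in> polyfun"

definition zariski_closed :: "(complex^'n^'n) set \<Rightarrow> bool" where
  "zariski_closed S \<longleftrightarrow> (\<exists>F \<subseteq> polyfun. S = {X. \<forall>p\<in>F. p X = 0})"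

definition SL :: "(complex^'n^'n) set" where
  "SL = {X. det X = 1}"

definition unitary :: "complex^'n^'n \<Rightarrow> bool" where
  "unitary U \<longleftrightarrow> ctransp U ** U = mat 1"

definition SU :: "(complex^'n^'n) set" where
  "SU = {U. unitary U \<and> det U = 1}"

definition is_subgroup_SL :: "(complex^'n^'n) set \<Rightarrow> bool" where
  "is_subgroup_SL G \<longleftrightarrow> G \<subseteq> SL \<and> mat 1 \<in> G \<and>
     (\<forall>X\<in>G. \<forall>Y\<in>G. X ** Y \<in> G) \<and> (\<forall>X\<in>G. matrix_inv X \<in> G)"

definition symmetric_subgroup :: "(complex^'n^'n) set \<Rightarrow> bool" where
  "symmetric_subgroup G \<longleftrightarrow> is_subgroup_SL G \<and> zariski_closed G \<and>
     (\<forall>X\<in>G. ctransp X \<in> G)"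

definition hermitian :: "complex^'n^'n \<Rightarrow> bool" where
  "hermitian H \<longleftrightarrow> ctransp H = H"

text \<open>i Lie(K) for K = G \<inter> SU: Hermitian H with exp(tH) in G for all real t.\<close>
definition iLie :: "(complex^'n^'n) set \<Rightarrow> (complex^'n^'n) set" where
  "iLie G = {H. hermitian H \<and> (\<forall>t::real. mexp (t *\<^sub>R H) \<in> G)}"

definition minner :: "complex^'n^'n \<Rightarrow> complex^'n^'n \<Rightarrow> real" where
  "minner H H' = Re (trace (ctransp H ** H'))"

text \<open>The cost C_A(KX) = log kappa_F(XA), written on a representative X of the coset KX
  (well defined since kappa_F is invariant under left multiplication by unitaries).\<close>
definition CA :: "complex^'n^'m \<Rightarrow> complex^'m^'m \<Rightarrow> real" where
  "CA A X = ln (kappaF (X ** A))"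

text \<open>Second directional derivative t \<mapsto> C_A(K e^{tH} X) at t = 0, i.e. the quadratic form
  of the Hessian at the coset KX.\<close>
definition hess_form :: "complex^'n^'m \<Rightarrow> complex^'m^'m \<Rightarrow> complex^'m^'m \<Rightarrow> real" where
  "hess_form A X H = deriv (deriv (\<lambda>t. CA A (mexp (t *\<^sub>R H) ** X))) 0"

definition is_hessian :: "(complex^'m^'m) set \<Rightarrow> complex^'n^'m \<Rightarrow> complex^'m^'m
    \<Rightarrow> (complex^'m^'m \<Rightarrow> complex^'m^'m) \<Rightarrow> bool" where
  "is_hessian G A X L \<longleftrightarrow> linear L \<and> (\<forall>H\<in>iLie G. L H \<in> iLie G) \<and>
     (\<forall>H\<in>iLie G. \<forall>H'\<in>iLie G. minner H (L H') = minner (L H) H') \<and>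
     (\<forall>H\<in>iLie G. minner H (L H) = hess_form A X H)"

end

theory Submission
  imports Defs
begin

text \<open>Write B = X A and P = B B*. As A has full row rank and X is invertible, P is invertible,
  the pseudoinverse is B* P^-1, and kappa_F(B)^2 = tr P tr P^-1. Along the curve e^(tH) X with H
  Hermitian, P becomes e^(tH) P e^(tH) and P^-1 becomes e^(-tH) P^-1 e^(-tH), so
  C_A(K e^(tH) X) = (log tr(e^(2tH) P) + log tr(e^(-2tH) P^-1)) / 2. Differentiating twice at 0
  gives the Hessian formula, each half being twice the variance of H in the state P / tr P,
  resp. P^-1 / tr P^-1. Since det e^(tH) = 1, H is traceless; shifting H by its mean and applying
  Cauchy--Schwarz bounds each variance below by tr(H^2) / (tr P tr P^-1) = |H|^2 / kappa_F(X A)^2.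
  Hence the Hessian form is at least 4 |H|^2 / kappa_F(X A)^2, and kappa_F(X A) \<le> kappa_F(A) on the
  sublevel set.\<close>

section \<open>Conjugate transpose and inverses\<close>

lemma ctransp_nth [simp]: "ctransp M $ i $ j = cnj (M $ j $ i)"
  by (simp add: ctransp_def)

lemma ctransp_ctransp [simp]: "ctransp (ctransp M) = M"
  by (simp add: vec_eq_iff)

lemma ctransp_matrix_mult: "ctransp (A ** B) = ctransp B ** ctransp A"
  by (simp add: vec_eq_iff matrix_matrix_mult_def mult.commute)

lemma ctransp_mat_1 [simp]: "ctransp (mat 1 :: complex^'n^'n) = mat 1"
  by (simp add: vec_eq_iff mat_def)

lemma ctransp_diff: "ctransp (A - B) = ctransp A - ctransp B"
  by (simp add: vec_eq_iff)

lemma ctransp_scaleR: "ctransp (r *\<^sub>R A) = r *\<^sub>R ctransp A"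
  by (simp add: vec_eq_iff)

lemma trace_ctransp: "trace (ctransp M) = cnj (trace M)"
  by (simp add: trace_def)

lemma hermitian_gram: "hermitian (B ** ctransp B)"
  by (simp add: hermitian_def ctransp_matrix_mult)

lemma hermitian_mult_self: "hermitian H \<Longrightarrow> hermitian (H ** H)"
  by (simp add: hermitian_def ctransp_matrix_mult)

lemma hermitian_minus_scalar: "hermitian H \<Longrightarrow> hermitian (H - c *\<^sub>R mat 1)"
  by (simp add: hermitian_def ctransp_diff ctransp_scaleR)

lemma trace_real_if_hermitian: "hermitian M \<Longrightarrow> trace M = of_real (Re (trace M))"
  by (metis hermitian_def complex_cnj_cancel_iff complex_is_Real_iff trace_ctransp Reals_cnj_iff
      of_real_Re)

lemma trace_mult_real_if_hermitian:
  assumes "hermitian M" "hermitian N"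
  shows "trace (M ** N) = of_real (Re (trace (M ** N)))"
proof -
  have "cnj (trace (M ** N)) = trace (M ** N)"
    by (metis assms hermitian_def ctransp_matrix_mult trace_ctransp trace_mul_sym)
  then show ?thesis by (metis Reals_cnj_iff of_real_Re)
qed

lemma trace_scaleR: "trace (c *\<^sub>R (M::complex^'n^'n)) = of_real c * trace M"
  unfolding trace_def vector_scaleR_component by (simp add: scaleR_conv_of_real sum_distrib_left)

lemma matrix_mult_diff_left: "(A::'a::ring_1^'n^'m) ** (B - C) = A ** B - A ** C"
  by (simp add: matrix_matrix_mult_def vec_eq_iff sum_subtractf algebra_simps)

lemma matrix_mult_diff_right: "((A::'a::ring_1^'n^'m) - B) ** C = A ** C - B ** C"
  by (simp add: matrix_matrix_mult_def vec_eq_iff sum_subtractf algebra_simps)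

lemma matrix_inv_right:
  fixes Q :: "'a::semiring_1^'n^'n"
  assumes "invertible Q"
  shows "Q ** matrix_inv Q = mat 1"
  using assms unfolding invertible_def matrix_inv_def by (metis (mono_tags, lifting) someI_ex)

lemma matrix_inv_left:
  fixes Q :: "'a::semiring_1^'n^'n"
  assumes "invertible Q"
  shows "matrix_inv Q ** Q = mat 1"
  using assms unfolding invertible_def matrix_inv_def by (metis (mono_tags, lifting) someI_ex)

lemma matrix_inv_eqI:
  fixes Q R :: "'a::field^'n^'n"
  assumes "Q ** R = mat 1"
  shows "matrix_inv Q = R"
proof -
  have "invertible Q" using assms invertible_right_inverse by blast
  then have "matrix_inv Q = matrix_inv Q ** (Q ** R)" using assms by simp
  also have "\<dots> = R" by (simp add: matrix_mul_assoc matrix_inv_left \<open>invertible Q\<close>)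
  finally show ?thesis .
qed

lemma invertible_ctransp:
  fixes Q :: "complex^'n^'n"
  assumes "invertible Q"
  shows "invertible (ctransp Q)"
  using assms invertible_right_inverse
  by (metis ctransp_mat_1 ctransp_matrix_mult matrix_inv_left)

lemma hermitian_matrix_inv:
  fixes Q :: "complex^'n^'n"
  assumes "invertible Q" "hermitian Q"
  shows "hermitian (matrix_inv Q)"
proof -
  have "Q ** ctransp (matrix_inv Q) = mat 1"
    using assms by (metis hermitian_def ctransp_mat_1 ctransp_matrix_mult matrix_inv_left)
  then show ?thesis unfolding hermitian_def by (metis matrix_inv_eqI)
qed

section \<open>Frobenius norm, pseudoinverse and condition number\<close>

lemma frob_sq: "(frob M)\<^sup>2 = (\<Sum>i\<in>UNIV. \<Sum>j\<in>UNIV. (cmod (M $ i $ j))\<^sup>2)"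
  unfolding frob_def by (simp add: sum_nonneg)

lemma frob_sq_trace: "(frob M)\<^sup>2 = Re (trace (M ** ctransp M))"
  unfolding frob_sq
  by (simp add: trace_def matrix_matrix_mult_def Re_sum flip: complex_norm_square)

lemma frob_sq_trace': "(frob M)\<^sup>2 = Re (trace (ctransp M ** M))"
  by (metis frob_sq_trace trace_mul_sym)

lemma frob_eq_norm: "frob M = norm M"
  by (simp add: frob_def norm_vec_def L2_set_def sum_nonneg)

lemma frob_nonneg: "frob M \<ge> 0"
  by (simp add: frob_eq_norm)

lemma frob_pos: "M \<noteq> 0 \<Longrightarrow> frob M > 0"
  by (simp add: frob_eq_norm)

lemma inner_matrix_eq_Re_trace: "inner U V = Re (trace (ctransp U ** V))"
proof -
  have "inner U V = (\<Sum>i\<in>UNIV. \<Sum>j\<in>UNIV. Re (cnj (U $ i $ j) * V $ i $ j))"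
    by (simp add: inner_vec_def inner_complex_def)
  also have "\<dots> = Re (trace (ctransp U ** V))"
    by (subst sum.swap) (simp add: trace_def matrix_matrix_mult_def Re_sum)
  finally show ?thesis .
qed

lemma Re_trace_Cauchy_Schwarz:
  "(Re (trace (ctransp U ** V)))\<^sup>2 \<le> (frob U)\<^sup>2 * (frob V)\<^sup>2"
  using Cauchy_Schwarz_ineq[of U V]
  by (simp add: frob_eq_norm power2_norm_eq_inner inner_matrix_eq_Re_trace)

lemma frob_matrix_mult_le:
  fixes U :: "complex^'l^'i" and V :: "complex^'j^'l"
  shows "(frob (U ** V))\<^sup>2 \<le> (frob U)\<^sup>2 * (frob V)\<^sup>2"
proof -
  have entry: "(cmod (\<Sum>l\<in>UNIV. U $ i $ l * V $ l $ j))\<^sup>2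
      \<le> (\<Sum>l\<in>UNIV. (cmod (U $ i $ l))\<^sup>2) * (\<Sum>l\<in>UNIV. (cmod (V $ l $ j))\<^sup>2)" for i j
  proof -
    have "cmod (\<Sum>l\<in>UNIV. U $ i $ l * V $ l $ j) \<le> (\<Sum>l\<in>UNIV. cmod (U $ i $ l) * cmod (V $ l $ j))"
      by (rule order_trans[OF norm_sum]) (simp add: norm_mult)
    then have "(cmod (\<Sum>l\<in>UNIV. U $ i $ l * V $ l $ j))\<^sup>2
        \<le> (\<Sum>l\<in>UNIV. cmod (U $ i $ l) * cmod (V $ l $ j))\<^sup>2"
      by (simp add: power_mono)
    also have "\<dots> \<le> (\<Sum>l\<in>UNIV. (cmod (U $ i $ l))\<^sup>2) * (\<Sum>l\<in>UNIV. (cmod (V $ l $ j))\<^sup>2)"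
      by (rule Cauchy_Schwarz_ineq_sum)
    finally show ?thesis .
  qed
  have "(frob (U ** V))\<^sup>2
      \<le> (\<Sum>i\<in>UNIV. \<Sum>j\<in>UNIV. (\<Sum>l\<in>UNIV. (cmod (U $ i $ l))\<^sup>2) * (\<Sum>l\<in>UNIV. (cmod (V $ l $ j))\<^sup>2))"
    unfolding frob_sq by (simp add: matrix_matrix_mult_def sum_mono entry)
  also have "\<dots> = (frob U)\<^sup>2 * (\<Sum>j\<in>UNIV. \<Sum>l\<in>UNIV. (cmod (V $ l $ j))\<^sup>2)"
    by (simp add: frob_sq sum_product)
  also have "(\<Sum>j\<in>UNIV. \<Sum>l\<in>UNIV. (cmod (V $ l $ j))\<^sup>2) = (frob V)\<^sup>2"
    unfolding frob_sq by (rule sum.swap)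
  finally show ?thesis .
qed

lemma frob_sq_hermitian: "hermitian Y \<Longrightarrow> (frob Y)\<^sup>2 = Re (trace (Y ** Y))"
  by (metis hermitian_def frob_sq_trace)

lemma pinv_unique:
  assumes "is_pinv M B" "is_pinv M C"
  shows "B = C"
proof -
  have a: "M ** B ** M = M" "B ** M ** B = B" "ctransp (M ** B) = M ** B"
    "ctransp (B ** M) = B ** M"
    using assms(1) unfolding is_pinv_def by auto
  have b: "M ** C ** M = M" "C ** M ** C = C" "ctransp (M ** C) = M ** C"
    "ctransp (C ** M) = C ** M"
    using assms(2) unfolding is_pinv_def by auto
  have "B = B ** ctransp (M ** B)" using a(2,3) by (simp add: matrix_mul_assoc)
  also have "\<dots> = B ** ctransp (M ** B) ** ctransp (M ** C)"
    using b(1) by (metis ctransp_matrix_mult matrix_mul_assoc)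
  also have "\<dots> = B ** M ** C" using a(2,3) b(3) by (simp add: matrix_mul_assoc)
  finally have BC: "B = B ** M ** C" .
  have "C = ctransp (C ** M) ** C" using b(2,4) by (simp add: matrix_mul_assoc)
  also have "\<dots> = ctransp (B ** M) ** ctransp (C ** M) ** C"
    using a(1) by (metis ctransp_matrix_mult matrix_mul_assoc)
  also have "\<dots> = B ** M ** C" using a(4) b(2,4) by (metis matrix_mul_assoc)
  finally show ?thesis using BC by simp
qed

lemma pinv_full_row_rank:
  fixes B :: "complex^'c^'r"
  assumes inv: "invertible (B ** ctransp B)"
  shows "pinv B = ctransp B ** matrix_inv (B ** ctransp B)"
proof -
  let ?R = "matrix_inv (B ** ctransp B)"
  have QR: "B ** (ctransp B ** ?R) = mat 1"
    using matrix_inv_right[OF inv] by (simp add: matrix_mul_assoc)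
  have RQ: "?R ** B ** ctransp B = mat 1"
    using matrix_inv_left[OF inv] by (simp add: matrix_mul_assoc)
  have hR: "ctransp ?R = ?R"
    using hermitian_matrix_inv[OF inv hermitian_gram] unfolding hermitian_def .
  have pinv: "is_pinv B (ctransp B ** ?R)"
    unfolding is_pinv_def
  proof (intro conjI)
    show "B ** (ctransp B ** ?R) ** B = B" by (simp add: QR)
    show "ctransp B ** ?R ** B ** (ctransp B ** ?R) = ctransp B ** ?R"
      by (metis QR matrix_mul_assoc matrix_mul_rid)
    show "ctransp (B ** (ctransp B ** ?R)) = B ** (ctransp B ** ?R)" by (simp add: QR)
    show "ctransp (ctransp B ** ?R ** B) = ctransp B ** ?R ** B"
      by (simp add: ctransp_matrix_mult hR matrix_mul_assoc)
  qed
  show ?thesis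
    unfolding pinv_def by (rule the_equality) (use pinv pinv_unique in blast)+
qed

lemma mat_1_neq_0: "(mat 1 :: 'a::zero_neq_one^'n^'n) \<noteq> 0"
proof
  assume "(mat 1 :: 'a^'n^'n) = 0"
  then have "(mat 1 :: 'a^'n^'n) $ i $ i = 0" for i by simp
  then show False by (simp add: mat_def)
qed

lemma matrix_mult_pinv_full_row_rank:
  fixes B :: "complex^'c^'r"
  assumes "invertible (B ** ctransp B)"
  shows "B ** pinv B = mat 1"
  using matrix_inv_right[OF assms] by (simp add: pinv_full_row_rank[OF assms] matrix_mul_assoc)

lemma frob_pinv_sq:
  fixes B :: "complex^'c^'r"
  assumes inv: "invertible (B ** ctransp B)"
  shows "(frob (pinv B))\<^sup>2 = Re (trace (matrix_inv (B ** ctransp B)))"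
proof -
  let ?R = "matrix_inv (B ** ctransp B)"
  have hR: "ctransp ?R = ?R"
    using hermitian_matrix_inv[OF inv hermitian_gram] unfolding hermitian_def .
  have "ctransp (pinv B) ** pinv B = ?R ** (B ** ctransp B) ** ?R"
    by (simp add: pinv_full_row_rank[OF inv] ctransp_matrix_mult hR matrix_mul_assoc)
  also have "\<dots> = ?R" by (simp add: matrix_inv_left[OF inv])
  finally show ?thesis by (simp add: frob_sq_trace')
qed

lemma Re_trace_gram_pos:
  fixes B :: "complex^'c^'r"
  assumes "invertible (B ** ctransp B)"
  shows "Re (trace (B ** ctransp B)) > 0"
proof -
  have "B \<noteq> 0"
    using matrix_mult_pinv_full_row_rank[OF assms] mat_1_neq_0 by force
  then show ?thesis using frob_pos frob_sq_trace by (metis zero_less_power2 less_irrefl)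
qed

lemma Re_trace_gram_inv_pos:
  fixes B :: "complex^'c^'r"
  assumes "invertible (B ** ctransp B)"
  shows "Re (trace (matrix_inv (B ** ctransp B))) > 0"
proof -
  have "pinv B \<noteq> 0"
    using matrix_mult_pinv_full_row_rank[OF assms] mat_1_neq_0 by force
  then show ?thesis using frob_pos frob_pinv_sq[OF assms] by (metis zero_less_power2 less_irrefl)
qed

lemma kappaF_sq:
  fixes B :: "complex^'c^'r"
  assumes "invertible (B ** ctransp B)"
  shows "(kappaF B)\<^sup>2 = Re (trace (B ** ctransp B)) * Re (trace (matrix_inv (B ** ctransp B)))"
  by (simp only: kappaF_def power_mult_distrib frob_pinv_sq[OF assms] frob_sq_trace[of B])

lemma kappaF_pos:
  fixes B :: "complex^'c^'r"
  assumes "invertible (B ** ctransp B)"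
  shows "kappaF B > 0"
proof -
  have "(kappaF B)\<^sup>2 > 0"
    using Re_trace_gram_pos[OF assms] Re_trace_gram_inv_pos[OF assms] by (simp add: kappaF_sq[OF assms])
  moreover have "kappaF B \<ge> 0" by (simp add: kappaF_def frob_nonneg)
  ultimately show ?thesis by (metis less_eq_real_def power_zero_numeral less_irrefl)
qed

lemma ln_kappaF:
  fixes B :: "complex^'c^'r"
  assumes "invertible (B ** ctransp B)"
  shows "ln (kappaF B) =
    (ln (Re (trace (B ** ctransp B))) + ln (Re (trace (matrix_inv (B ** ctransp B))))) / 2"
proof -
  have "ln (kappaF B) = ln ((kappaF B)\<^sup>2) / 2"
    using kappaF_pos[OF assms] by (simp add: ln_realpow)
  also have "\<dots> = (ln (Re (trace (B ** ctransp B))) + ln (Re (trace (matrix_inv (B ** ctransp B))))) / 2"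
    unfolding kappaF_sq[OF assms]
      ln_mult_pos[OF Re_trace_gram_pos[OF assms] Re_trace_gram_inv_pos[OF assms]] ..
  finally show ?thesis .
qed

section \<open>The matrix exponential\<close>

lemma mpow_scaleR: "mpow (t *\<^sub>R H) k = (t ^ k) *\<^sub>R mpow H k"
  by (induction k) (simp_all add: matrix_scalar_ac scalar_matrix_assoc[symmetric])

lemma mpow_add: "mpow H (a + b) = mpow H a ** mpow H b"
  by (induction a) (simp_all add: matrix_mul_assoc)

lemma mpow_commute: "H ** mpow H k = mpow H k ** H"
  using mpow_add[of H k 1] by simp

lemma ctransp_mpow: "ctransp (mpow H k) = mpow (ctransp H) k"
  by (induction k) (simp_all add: ctransp_matrix_mult mpow_commute)

definition entry_abs_sum :: "complex^'n^'n \<Rightarrow> real" where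
  "entry_abs_sum H = (\<Sum>i\<in>UNIV. \<Sum>j\<in>UNIV. cmod (H $ i $ j))"

lemma row_abs_sum_le_entry_abs_sum: "(\<Sum>l\<in>UNIV. cmod (H $ i $ l)) \<le> entry_abs_sum H"
  unfolding entry_abs_sum_def
  by (rule member_le_sum[where f="\<lambda>i. \<Sum>j\<in>UNIV. cmod (H $ i $ j)"]) (auto intro: sum_nonneg)

lemma norm_mpow_entry_le: "cmod (mpow H k $ i $ j) \<le> entry_abs_sum H ^ k"
proof (induction k arbitrary: i j)
  case 0
  then show ?case by (simp add: mat_def)
next
  case (Suc k)
  have "cmod (mpow H (Suc k) $ i $ j) = cmod (\<Sum>l\<in>UNIV. H $ i $ l * mpow H k $ l $ j)"
    by (simp add: matrix_matrix_mult_def)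
  also have "\<dots> \<le> (\<Sum>l\<in>UNIV. cmod (H $ i $ l) * cmod (mpow H k $ l $ j))"
    by (rule order_trans[OF norm_sum]) (simp add: norm_mult)
  also have "\<dots> \<le> (\<Sum>l\<in>UNIV. cmod (H $ i $ l)) * entry_abs_sum H ^ k"
    by (simp add: sum_distrib_right Suc.IH mult_left_mono sum_mono)
  also have "\<dots> \<le> entry_abs_sum H * entry_abs_sum H ^ k"
    by (rule mult_right_mono[OF row_abs_sum_le_entry_abs_sum])
      (simp add: entry_abs_sum_def sum_nonneg)
  finally show ?case by simp
qed

text \<open>The entries of exp(z H) as power series in a complex variable z: the Cauchy product gives
  the group law, and complex differentiability in z is what Jacobi's formula below needs.\<close>
definition mexp_coeff :: "complex^'n^'n \<Rightarrow> 'n \<Rightarrow> 'n \<Rightarrow> nat \<Rightarrow> complex" where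
  "mexp_coeff H i j k = mpow H k $ i $ j / fact k"

definition mexp_entry :: "complex^'n^'n \<Rightarrow> 'n \<Rightarrow> 'n \<Rightarrow> complex \<Rightarrow> complex" where
  "mexp_entry H i j z = (\<Sum>k. mexp_coeff H i j k * z ^ k)"

lemma summable_norm_mexp_coeff: "summable (\<lambda>k. norm (mexp_coeff H i j k * z ^ k))"
proof (rule summable_comparison_test)
  show "summable (\<lambda>k. inverse (fact k) * (entry_abs_sum H * norm z) ^ k)"
    by (rule summable_exp)
  have "norm (norm (mexp_coeff H i j k * z ^ k)) \<le> inverse (fact k) * (entry_abs_sum H * norm z) ^ k"
    for k
  proof -
    have "norm (norm (mexp_coeff H i j k * z ^ k)) = cmod (mpow H k $ i $ j) * norm z ^ k / fact k"
      by (simp add: mexp_coeff_def norm_mult norm_divide norm_power)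
    also have "\<dots> \<le> entry_abs_sum H ^ k * norm z ^ k / fact k"
      by (intro divide_right_mono mult_right_mono norm_mpow_entry_le) auto
    finally show ?thesis by (simp add: power_mult_distrib divide_inverse mult_ac)
  qed
  then show "\<exists>N. \<forall>k\<ge>N. norm (norm (mexp_coeff H i j k * z ^ k))
      \<le> inverse (fact k) * (entry_abs_sum H * norm z) ^ k"
    by blast
qed

lemma summable_mexp_coeff: "summable (\<lambda>k. mexp_coeff H i j k * z ^ k)"
  by (rule summable_norm_cancel[OF summable_norm_mexp_coeff])

lemma sums_mexp_entry: "(\<lambda>k. mexp_coeff H i j k * z ^ k) sums mexp_entry H i j z"
  unfolding mexp_entry_def by (rule summable_sums[OF summable_mexp_coeff])

lemma sums_matrix_entrywise:
  fixes f :: "nat \<Rightarrow> 'a::real_normed_vector^'n^'m"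
  assumes "\<And>i j. (\<lambda>k. f k $ i $ j) sums (L $ i $ j)"
  shows "f sums L"
  using assms unfolding sums_def by (intro vec_tendstoI) simp

lemma mexp_scaleR_eq: "mexp (t *\<^sub>R H) = (\<chi> i j. mexp_entry H i j (of_real t))"
proof -
  have "(1 / fact k) *\<^sub>R mpow (t *\<^sub>R H) k $ i $ j = mexp_coeff H i j k * (of_real t) ^ k" for k i j
    unfolding mpow_scaleR vector_scaleR_component
    by (simp add: mexp_coeff_def scaleR_conv_of_real divide_inverse mult.commute)
  then have "(\<lambda>k. (1 / fact k) *\<^sub>R mpow (t *\<^sub>R H) k) sums (\<chi> i j. mexp_entry H i j (of_real t))"
    by (intro sums_matrix_entrywise) (simp add: sums_mexp_entry)
  then show ?thesis unfolding mexp_def by (rule sums_unique[symmetric])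
qed

lemma mexp_scaleR_nth: "mexp (t *\<^sub>R H) $ i $ j = mexp_entry H i j (of_real t)"
  by (simp add: mexp_scaleR_eq)

lemma mexp_entry_add:
  "(\<Sum>l\<in>UNIV. mexp_entry H i l z * mexp_entry H l j w) = mexp_entry H i j (z + w)"
proof -
  have "(\<lambda>n. \<Sum>l\<in>UNIV. \<Sum>a\<le>n. (mexp_coeff H i l a * z ^ a) * (mexp_coeff H l j (n - a) * w ^ (n - a)))
     sums (\<Sum>l\<in>UNIV. mexp_entry H i l z * mexp_entry H l j w)"
    unfolding mexp_entry_def
    by (intro sums_sum Cauchy_product_sums summable_norm_mexp_coeff)
  moreover have "(\<Sum>l\<in>UNIV. \<Sum>a\<le>n. (mexp_coeff H i l a * z ^ a) * (mexp_coeff H l j (n - a) * w ^ (n - a)))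
      = mexp_coeff H i j n * (z + w) ^ n" for n
  proof -
    have "mpow H n $ i $ j = (\<Sum>l\<in>UNIV. mpow H a $ i $ l * mpow H (n - a) $ l $ j)" if "a \<le> n" for a
      using that mpow_add[of H a "n - a"] by (simp add: matrix_matrix_mult_def)
    then have "(\<Sum>l\<in>UNIV. \<Sum>a\<le>n. (mexp_coeff H i l a * z ^ a) * (mexp_coeff H l j (n - a) * w ^ (n - a)))
        = (\<Sum>a\<le>n. (z ^ a /\<^sub>R fact a) * (w ^ (n - a) /\<^sub>R fact (n - a))) * mpow H n $ i $ j"
      by (simp add: sum.swap[of _ UNIV] mexp_coeff_def sum_distrib_left sum_distrib_right
          scaleR_conv_of_real field_simps)
    also have "\<dots> = ((z + w) ^ n /\<^sub>R fact n) * mpow H n $ i $ j"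
      using exp_series_add_commuting[of z w n] by (simp add: mult.commute)
    also have "\<dots> = mexp_coeff H i j n * (z + w) ^ n"
      by (simp add: mexp_coeff_def scaleR_conv_of_real divide_inverse mult_ac)
    finally show ?thesis .
  qed
  ultimately show ?thesis
    unfolding mexp_entry_def by (simp add: sums_unique)
qed

lemma mexp_entry_0: "mexp_entry H i j 0 = (if i = j then 1 else 0)"
  unfolding mexp_entry_def using powser_zero[of "mexp_coeff H i j"] by (simp add: mexp_coeff_def mat_def)

lemma mexp_scaleR_add: "mexp (s *\<^sub>R H) ** mexp (t *\<^sub>R H) = mexp ((s + t) *\<^sub>R H)"
  unfolding mexp_scaleR_eq matrix_matrix_mult_def by (simp add: mexp_entry_add)

lemma mexp_scaleR_zero: "mexp (0 *\<^sub>R H) = mat 1"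
  unfolding mexp_scaleR_eq by (simp add: vec_eq_iff mexp_entry_0 mat_def)

lemma mexp_scaleR_minus: "mexp (t *\<^sub>R H) ** mexp ((- t) *\<^sub>R H) = mat 1"
  using mexp_scaleR_add[of t H "- t"] mexp_scaleR_zero[of H] by simp

lemma invertible_mexp_scaleR: "invertible (mexp (t *\<^sub>R H))"
  using mexp_scaleR_minus invertible_right_inverse by blast

lemma hermitian_mexp_scaleR:
  assumes "hermitian H"
  shows "hermitian (mexp (t *\<^sub>R H))"
proof -
  have "cnj (mexp_coeff H j i k) = mexp_coeff H i j k" for i j k
    using assms ctransp_mpow[of H k] unfolding hermitian_def
    by (metis ctransp_nth complex_cnj_divide complex_cnj_fact mexp_coeff_def)
  then have "(\<lambda>k. mexp_coeff H i j k * (of_real t) ^ k) sums cnj (mexp_entry H j i (of_real t))"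
    for i j
    using sums_cnj[THEN iffD2, OF sums_mexp_entry[of H j i "of_real t"]] by simp
  then have "cnj (mexp_entry H j i (of_real t)) = mexp_entry H i j (of_real t)" for i j
    using sums_mexp_entry sums_unique2 by blast
  then show ?thesis
    unfolding hermitian_def by (simp add: vec_eq_iff mexp_scaleR_nth)
qed

section \<open>Traces along the exponential curve and Jacobi's formula\<close>

definition trace_exp :: "complex^'n^'n \<Rightarrow> complex^'n^'n \<Rightarrow> real \<Rightarrow> real" where
  "trace_exp H M t = Re (trace (mexp (t *\<^sub>R H) ** M))"

definition trace_exp_coeff :: "complex^'n^'n \<Rightarrow> complex^'n^'n \<Rightarrow> nat \<Rightarrow> real" where
  "trace_exp_coeff H M k = Re (trace (mpow H k ** M)) / fact k"

lemma sums_trace_exp: "(\<lambda>k. trace_exp_coeff H M k * t ^ k) sums trace_exp H M t"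
proof -
  have "(\<lambda>k. \<Sum>i\<in>UNIV. \<Sum>l\<in>UNIV. mexp_coeff H i l k * (of_real t) ^ k * M $ l $ i)
      sums (\<Sum>i\<in>UNIV. \<Sum>l\<in>UNIV. mexp_entry H i l (of_real t) * M $ l $ i)"
    by (intro sums_sum sums_mult2 sums_mexp_entry)
  moreover have "(\<Sum>i\<in>UNIV. \<Sum>l\<in>UNIV. mexp_coeff H i l k * (of_real t) ^ k * M $ l $ i)
      = (t ^ k / fact k) *\<^sub>R trace (mpow H k ** M)" for k
    by (simp add: mexp_coeff_def trace_def matrix_matrix_mult_def sum_distrib_left scaleR_conv_of_real
        field_simps)
  moreover have "(\<Sum>i\<in>UNIV. \<Sum>l\<in>UNIV. mexp_entry H i l (of_real t) * M $ l $ i)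
      = trace (mexp (t *\<^sub>R H) ** M)"
    by (simp add: mexp_scaleR_nth trace_def matrix_matrix_mult_def)
  ultimately have "(\<lambda>k. (t ^ k / fact k) *\<^sub>R trace (mpow H k ** M))
      sums trace (mexp (t *\<^sub>R H) ** M)"
    by simp
  from sums_Re[OF this] show ?thesis
    unfolding trace_exp_def trace_exp_coeff_def by (simp add: mult_ac)
qed

lemma diffs_trace_exp_coeff: "diffs (trace_exp_coeff H M) = trace_exp_coeff H (H ** M)"
proof
  fix n
  have "mpow H (Suc n) ** M = mpow H n ** (H ** M)"
    by (simp add: mpow_commute matrix_mul_assoc)
  then show "diffs (trace_exp_coeff H M) n = trace_exp_coeff H (H ** M) n"
    unfolding diffs_def trace_exp_coeff_def by (simp del: of_nat_Suc)
qed

lemma has_real_derivative_trace_exp: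
  "(trace_exp H M has_real_derivative trace_exp H (H ** M) t) (at t)"
proof -
  have "trace_exp H M = (\<lambda>t. \<Sum>k. trace_exp_coeff H M k * t ^ k)" for M
    by (rule ext, rule sums_unique[OF sums_trace_exp])
  moreover have "((\<lambda>t. \<Sum>k. trace_exp_coeff H M k * t ^ k) has_real_derivative
      (\<Sum>k. diffs (trace_exp_coeff H M) k * t ^ k)) (at t)"
    by (rule termdiffs_strong_converges_everywhere) (rule sums_summable[OF sums_trace_exp])
  ultimately show ?thesis by (simp add: diffs_trace_exp_coeff)
qed

lemma trace_exp_0: "trace_exp H M 0 = Re (trace M)"
  unfolding trace_exp_def using mexp_scaleR_zero[of H] by simp

lemma has_field_derivative_mexp_entry_0: "(mexp_entry H i j has_field_derivative H $ i $ j) (at 0)"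
proof -
  have "(mexp_entry H i j has_field_derivative (\<Sum>k. diffs (mexp_coeff H i j) k * 0 ^ k)) (at 0)"
    unfolding mexp_entry_def[abs_def]
    by (rule termdiffs_strong_converges_everywhere) (rule summable_mexp_coeff)
  moreover have "(\<Sum>k. diffs (mexp_coeff H i j) k * 0 ^ k) = H $ i $ j"
    by (simp add: diffs_def mexp_coeff_def)
  ultimately show ?thesis by simp
qed

lemma prod_fixpoint_indicator_eq_0:
  fixes p :: "'n::finite \<Rightarrow> 'n"
  assumes p: "p permutes UNIV" and np: "p \<noteq> id"
  shows "(\<Prod>y\<in>UNIV - {x}. (if y = p y then 1 else 0 :: complex)) = 0"
proof -
  obtain a where a: "p a \<noteq> a" using np by (metis eq_id_iff)
  have "\<exists>y. y \<noteq> x \<and> p y \<noteq> y"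
  proof (cases "a = x")
    case True
    have "p (p a) \<noteq> p a" using a permutes_inj[OF p] by (metis injD)
    then show ?thesis using a True by metis
  next
    case False then show ?thesis using a by blast
  qed
  then obtain y where "y \<noteq> x" "p y \<noteq> y" by blast
  then show ?thesis by (intro prod_zero) (auto intro!: bexI[of _ y])
qed

lemma has_field_derivative_det_mexp_entry_0:
  fixes H :: "complex^'n^'n"
  shows "((\<lambda>z. det (\<chi> i j. mexp_entry H i j z)) has_field_derivative trace H) (at 0)"
proof -
  let ?S = "{p. p permutes (UNIV :: 'n set)}"
  have deriv: "((\<lambda>z. det (\<chi> i j. mexp_entry H i j z)) has_field_derivative
     (\<Sum>p\<in>?S. of_int (sign p) *
        (\<Sum>x\<in>UNIV. H $ x $ p x * (\<Prod>y\<in>UNIV-{x}. mexp_entry H y (p y) 0)))) (at 0)"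
    unfolding det_def
    by (auto intro!: DERIV_sum DERIV_cmult has_field_derivative_prod has_field_derivative_mexp_entry_0)
  have summand: "of_int (sign p) * (\<Sum>x\<in>UNIV. H $ x $ p x * (\<Prod>y\<in>UNIV-{x}. mexp_entry H y (p y) 0))
      = (if p = id then trace H else 0)" if "p \<in> ?S" for p
    using that
    by (cases "p = id") (simp_all add: mexp_entry_0 sign_id trace_def prod_fixpoint_indicator_eq_0)
  have "(\<Sum>p\<in>?S. of_int (sign p) *
        (\<Sum>x\<in>UNIV. H $ x $ p x * (\<Prod>y\<in>UNIV-{x}. mexp_entry H y (p y) 0)))
      = (\<Sum>p\<in>?S. if p = id then trace H else 0)"
    by (rule sum.cong[OF refl summand])
  also have "\<dots> = trace H"
    by (simp add: sum.delta' permutes_id)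
  finally have "(\<Sum>p\<in>?S. of_int (sign p) *
        (\<Sum>x\<in>UNIV. H $ x $ p x * (\<Prod>y\<in>UNIV-{x}. mexp_entry H y (p y) 0))) = trace H" .
  then show ?thesis using deriv by (simp only:)
qed

lemma trace_eq_0_if_det_mexp_eq_1:
  assumes "\<And>t. det (mexp (t *\<^sub>R H)) = 1"
  shows "trace H = 0"
proof -
  have "((\<lambda>t. det (\<chi> i j. mexp_entry H i j (of_real t))) has_vector_derivative trace H) (at 0)"
    using has_field_derivative_det_mexp_entry_0[of H]
    by (intro has_vector_derivative_real_field) simp
  moreover have "(\<lambda>t. det (\<chi> i j. mexp_entry H i j (of_real t))) = (\<lambda>t. 1)"
    using assms by (simp add: mexp_scaleR_eq)
  ultimately have "((\<lambda>t::real. 1::complex) has_vector_derivative trace H) (at 0)"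
    by simp
  then show ?thesis
    using vector_derivative_unique_at has_vector_derivative_const by blast
qed

section \<open>Full row rank\<close>

lemma full_row_rank_right_inverse:
  fixes A :: "'a::field^'n^'m"
  assumes rk: "rank A = CARD('m)"
  shows "\<exists>R. A ** R = mat 1"
proof -
  let ?r = "range (\<lambda>i. row i A)"
  have rows: "rows A = ?r" by (auto simp: rows_def)
  have "vec.dim ?r \<le> card ?r"
    by (rule vec.dim_le_card) (auto intro: vec.span_base)
  moreover have "card ?r \<le> CARD('m)" by (rule card_image_le) simp
  ultimately have card_r: "card ?r = vec.dim ?r" "card ?r = CARD('m)"
    using rk rows unfolding row_rank_def_gen by auto
  then have inj: "inj (\<lambda>i. row i A)"
    using inj_on_iff_eq_card[of UNIV "\<lambda>i. row i A"] by simp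
  have "vec.independent ?r"
    using vec.card_eq_dim[of ?r ?r] card_r(1) by (auto intro: vec.span_base)
  then have indep: "(\<Sum>v\<in>?r. c v *s v) = 0 \<Longrightarrow> v \<in> ?r \<Longrightarrow> c v = 0" for c v
    unfolding vec.independent_explicit by blast
  have inv_row: "the_inv (\<lambda>i. row i A) (row j A) = j" for j
    using the_inv_f_f[OF inj, of j] by simp
  have "c i = 0" if "(\<Sum>i\<in>UNIV. c i *s row i A) = 0" for c :: "'m \<Rightarrow> 'a" and i
    using indep[of "\<lambda>v. c (the_inv (\<lambda>i. row i A) v)" "row i A"] that inj
    by (simp add: sum.reindex inv_row)
  then show ?thesis
    unfolding matrix_right_invertible_independent_rows by blast
qed

lemma ctransp_mult_eq_0_if_gram_mult_eq_0:
  fixes A :: "complex^'n^'m" and w :: "complex^'m"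
  assumes "(A ** ctransp A) *v w = 0"
  shows "ctransp A *v w = 0"
proof -
  let ?u = "ctransp A *v w"
  have "(A ** ctransp A) *v w = A *v ?u" by (simp add: matrix_vector_mul_assoc)
  then have "0 = (\<Sum>i\<in>UNIV. cnj (w $ i) * (A *v ?u) $ i)" using assms by simp
  also have "\<dots> = (\<Sum>i\<in>UNIV. cnj (w $ i) * (\<Sum>j\<in>UNIV. A $ i $ j * ?u $ j))"
    by (simp add: matrix_vector_mult_def)
  also have "\<dots> = (\<Sum>i\<in>UNIV. \<Sum>j\<in>UNIV. cnj (w $ i) * A $ i $ j * ?u $ j)"
    by (simp add: sum_distrib_left mult.assoc)
  also have "\<dots> = (\<Sum>j\<in>UNIV. ?u $ j * (\<Sum>i\<in>UNIV. A $ i $ j * cnj (w $ i)))"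
    by (subst sum.swap) (simp add: sum_distrib_left mult_ac)
  also have "\<dots> = (\<Sum>j\<in>UNIV. ?u $ j * cnj (?u $ j))"
    by (simp add: matrix_vector_mult_def)
  also have "\<dots> = of_real (\<Sum>j\<in>UNIV. (cmod (?u $ j))\<^sup>2)"
    by (simp only: of_real_sum complex_norm_square)
  finally have "(\<Sum>j\<in>UNIV. (cmod (?u $ j))\<^sup>2) = 0" by (metis of_real_eq_0_iff)
  then show ?thesis by (simp add: vec_eq_iff sum_nonneg_eq_0_iff)
qed

lemma invertible_gram_if_right_inverse:
  fixes A :: "complex^'n^'m"
  assumes "A ** R = mat 1"
  shows "invertible (A ** ctransp A)"
proof -
  have RA: "ctransp R ** ctransp A = mat 1"
    using assms by (metis ctransp_mat_1 ctransp_matrix_mult)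
  have "w = 0" if "(A ** ctransp A) *v w = 0" for w
  proof -
    have "(ctransp R ** ctransp A) *v w = 0"
      using ctransp_mult_eq_0_if_gram_mult_eq_0[OF that] by (simp flip: matrix_vector_mul_assoc)
    then show ?thesis using RA by simp
  qed
  then show ?thesis
    using matrix_left_invertible_ker invertible_left_inverse by blast
qed

section \<open>Variance bounds\<close>

text \<open>With U = B* Y and V = B* P^-1 Y one has U* V = Y^2, so Cauchy--Schwarz gives
  tr(Y^2)^2 \<le> tr(Y P Y) tr(Y P^-1 Y), and tr(Y P^-1 Y) \<le> tr(P^-1) tr(Y^2) by
  submultiplicativity of the Frobenius norm.\<close>
lemma Re_trace_sq_le:
  fixes B :: "complex^'n^'m" and Y :: "complex^'m^'m"
  assumes inv: "invertible (B ** ctransp B)" and hY: "hermitian Y"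
  shows "Re (trace (Y ** Y))
    \<le> Re (trace (matrix_inv (B ** ctransp B))) * Re (trace (Y ** (B ** ctransp B) ** Y))"
proof -
  let ?P = "B ** ctransp B" let ?R = "matrix_inv ?P"
  have Y: "ctransp Y = Y" using hY unfolding hermitian_def .
  have R: "ctransp ?R = ?R"
    using hermitian_matrix_inv[OF inv hermitian_gram] unfolding hermitian_def .
  have PR: "X ** B ** ctransp B ** ?R = X" for X :: "complex^'m^'k"
    by (metis matrix_inv_right[OF inv] matrix_mul_assoc matrix_mul_rid)
  have RP: "X ** ?R ** B ** ctransp B = X" for X :: "complex^'m^'k"
    by (metis matrix_inv_left[OF inv] matrix_mul_assoc matrix_mul_rid)
  have RP1: "?R ** B ** ctransp B = mat 1"
    using matrix_inv_left[OF inv] by (simp add: matrix_mul_assoc)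
  define a where "a = Re (trace (Y ** Y))"
  define p where "p = Re (trace (Y ** ?P ** Y))"
  define q where "q = Re (trace (Y ** ?R ** Y))"
  define r where "r = Re (trace ?R)"
  have a0: "a \<ge> 0"
    unfolding a_def using frob_sq_hermitian[OF hY] by (metis zero_le_power2)
  have "(frob (ctransp B ** Y))\<^sup>2 = p"
    unfolding p_def frob_sq_trace' by (simp add: ctransp_matrix_mult Y matrix_mul_assoc)
  then have p0: "p \<ge> 0" by (metis zero_le_power2)
  have q_le: "q \<le> r * a"
    using frob_matrix_mult_le[of "ctransp (?R ** B)" Y]
    unfolding frob_sq_trace' frob_sq_hermitian[OF hY] a_def q_def r_def
    by (simp add: ctransp_matrix_mult Y R matrix_mul_assoc RP RP1)
  have "a * a \<le> p * q"
    using Re_trace_Cauchy_Schwarz[of "ctransp B ** Y" "ctransp B ** ?R ** Y"]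
    unfolding frob_sq_trace' a_def p_def q_def
    by (simp add: ctransp_matrix_mult Y R matrix_mul_assoc PR RP power2_eq_square)
  also have "\<dots> \<le> p * (r * a)"
    using q_le p0 by (rule mult_left_mono)
  finally have "a * a \<le> (r * p) * a" by (simp add: mult_ac)
  then have "a \<le> r * p"
    using a0 p0 r_def Re_trace_gram_inv_pos[OF inv]
    by (metis mult_right_le_imp_le order_le_less mult_nonneg_nonneg less_eq_real_def)
  then show ?thesis unfolding a_def r_def p_def by (simp add: matrix_mul_assoc)
qed

definition trace_variance :: "complex^'n^'n \<Rightarrow> complex^'n^'n \<Rightarrow> real" where
  "trace_variance M H =
     Re (trace (H ** H ** M)) / Re (trace M) - (Re (trace (H ** M)))\<^sup>2 / (Re (trace M))\<^sup>2"

lemma Re_trace_shift_sandwich: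
  fixes H P :: "complex^'m^'m"
  shows "Re (trace ((H - c *\<^sub>R mat 1) ** P ** (H - c *\<^sub>R mat 1)))
    = Re (trace (H ** H ** P)) - 2 * c * Re (trace (H ** P)) + c\<^sup>2 * Re (trace P)"
proof -
  have expand: "(H - c *\<^sub>R mat 1) ** P ** (H - c *\<^sub>R mat 1)
      = H ** P ** H - c *\<^sub>R (P ** H) - (c *\<^sub>R (H ** P) - c *\<^sub>R (c *\<^sub>R P))"
    by (simp add: matrix_mult_diff_left matrix_mult_diff_right matrix_scalar_ac
        scalar_matrix_assoc[symmetric] scaleR_right_diff_distrib)
  have "trace (H ** P ** H) = trace (H ** H ** P)"
    using trace_mul_sym[of "H ** P" H] by (simp add: matrix_mul_assoc)
  then show ?thesis
    unfolding expand trace_sub trace_scaleR trace_mul_sym[of P H]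
    by (simp add: power2_eq_square algebra_simps)
qed

text \<open>Apply Re_trace_sq_le to the shift Y = H - c I by the mean c = tr(HP)/tr(P): then
  tr(Y P Y) = tr(P) times the variance, while tr(Y^2) \<ge> tr(H^2) as H is traceless.\<close>
lemma trace_variance_ge:
  fixes B :: "complex^'n^'m" and H :: "complex^'m^'m"
  assumes inv: "invertible (B ** ctransp B)" and hH: "hermitian H" and trH: "trace H = 0"
  defines "P \<equiv> B ** ctransp B"
  shows "Re (trace (H ** H)) / (Re (trace P) * Re (trace (matrix_inv P))) \<le> trace_variance P H"
proof -
  define c where "c = Re (trace (H ** P)) / Re (trace P)"
  let ?Y = "H - c *\<^sub>R mat 1"
  have s: "Re (trace P) > 0" and S: "Re (trace (matrix_inv P)) > 0"
    unfolding P_def using Re_trace_gram_pos[OF inv] Re_trace_gram_inv_pos[OF inv] by auto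
  have "Re (trace (?Y ** ?Y)) = Re (trace (H ** H)) + c\<^sup>2 * of_nat CARD('m)"
    using Re_trace_shift_sandwich[of H c "mat 1"] trH by (simp add: trace_I)
  then have "Re (trace (H ** H)) \<le> Re (trace (?Y ** ?Y))" by simp
  also have "\<dots> \<le> Re (trace (matrix_inv P)) * Re (trace (?Y ** P ** ?Y))"
    unfolding P_def by (rule Re_trace_sq_le[OF inv hermitian_minus_scalar[OF hH]])
  also have "Re (trace (?Y ** P ** ?Y)) = Re (trace P) * trace_variance P H"
    unfolding Re_trace_shift_sandwich trace_variance_def c_def
    using s by (simp add: field_simps power2_eq_square)
  finally show ?thesis
    using s S by (simp add: pos_divide_le_eq mult_ac)
qed

lemma gram_matrix_inv:
  fixes B :: "complex^'n^'m"
  assumes inv: "invertible (B ** ctransp B)"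
  defines "D \<equiv> matrix_inv (B ** ctransp B) ** B"
  shows "D ** ctransp D = matrix_inv (B ** ctransp B)"
proof -
  have "ctransp (matrix_inv (B ** ctransp B)) = matrix_inv (B ** ctransp B)"
    using hermitian_matrix_inv[OF inv hermitian_gram] unfolding hermitian_def .
  then show ?thesis
    unfolding D_def using matrix_inv_left[OF inv]
    by (simp add: ctransp_matrix_mult matrix_mul_assoc)
qed

lemma trace_variance_inv_ge:
  fixes B :: "complex^'n^'m" and H :: "complex^'m^'m"
  assumes inv: "invertible (B ** ctransp B)" and hH: "hermitian H" and trH: "trace H = 0"
  defines "P \<equiv> B ** ctransp B"
  shows "Re (trace (H ** H)) / (Re (trace P) * Re (trace (matrix_inv P)))
    \<le> trace_variance (matrix_inv P) H"
proof -
  let ?D = "matrix_inv P ** B"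
  have DD: "?D ** ctransp ?D = matrix_inv P"
    unfolding P_def by (rule gram_matrix_inv[OF inv])
  have "invertible (matrix_inv P)" and "matrix_inv (matrix_inv P) = P"
    using matrix_inv_left[OF inv] invertible_right_inverse matrix_inv_eqI unfolding P_def by blast+
  then show ?thesis
    using trace_variance_ge[of ?D H] DD hH trH by (simp add: mult.commute)
qed

section \<open>The Hessian of the log condition number\<close>

lemma DERIV_comp_scale:
  assumes "\<And>t. (f has_real_derivative f' t) (at t)"
  shows "((\<lambda>t. f (c * t)) has_real_derivative c * f' (c * t)) (at t)"
  using DERIV_chain2[OF assms DERIV_cmult_Id[of c t]] by (simp add: mult.commute)

lemma DERIV_ln_comp_scale:
  assumes "\<And>t. (f has_real_derivative f' t) (at t)" "\<And>t. f t > 0"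
  shows "((\<lambda>t. ln (f (c * t))) has_real_derivative c * f' (c * t) / f (c * t)) (at t)"
  using DERIV_chain2[OF DERIV_ln[OF assms(2)] DERIV_comp_scale[OF assms(1)]]
  by (rule DERIV_cong) (simp add: divide_inverse)

lemma DERIV_log_deriv_comp_scale:
  assumes "\<And>t. (f has_real_derivative f' t) (at t)" "\<And>t. (f' has_real_derivative f'' t) (at t)"
    and "\<And>t. f t > 0"
  shows "((\<lambda>t. f' (c * t) / f (c * t)) has_real_derivative
     c * (f'' (c * t) / f (c * t) - (f' (c * t))\<^sup>2 / (f (c * t))\<^sup>2)) (at t)"
proof -
  have "((\<lambda>t. f' (c * t) / f (c * t)) has_real_derivative
     (c * f'' (c * t) * f (c * t) - f' (c * t) * (c * f' (c * t))) / (f (c * t) * f (c * t))) (at t)"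
    using assms(3)[of "c * t"]
    by (intro DERIV_divide DERIV_comp_scale assms(1,2)) simp
  moreover have "(c * f'' (c * t) * f (c * t) - f' (c * t) * (c * f' (c * t))) / (f (c * t) * f (c * t))
      = c * (f'' (c * t) / f (c * t) - (f' (c * t))\<^sup>2 / (f (c * t))\<^sup>2)"
    using assms(3)[of "c * t"] by (simp add: field_simps power2_eq_square)
  ultimately show ?thesis by simp
qed

lemma second_deriv_half_log_sum:
  fixes p p1 p2 q q1 q2 :: "real \<Rightarrow> real"
  assumes dp: "\<And>t. (p has_real_derivative p1 t) (at t)"
    and dp1: "\<And>t. (p1 has_real_derivative p2 t) (at t)"
    and dq: "\<And>t. (q has_real_derivative q1 t) (at t)"
    and dq1: "\<And>t. (q1 has_real_derivative q2 t) (at t)"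
    and pos: "\<And>t. p t > 0" "\<And>t. q t > 0"
    and g: "g = (\<lambda>t. (ln (p (2 * t)) + ln (q (-2 * t))) / 2)"
  shows "(\<forall>t. g differentiable (at t)) \<and> deriv g differentiable (at 0) \<and>
     deriv (deriv g) 0 = 2 * (p2 0 / p 0 - (p1 0)\<^sup>2 / (p 0)\<^sup>2) + 2 * (q2 0 / q 0 - (q1 0)\<^sup>2 / (q 0)\<^sup>2)"
proof -
  define g' where "g' = (\<lambda>t. p1 (2 * t) / p (2 * t) - q1 (-2 * t) / q (-2 * t))"
  have dg: "(g has_real_derivative g' t) (at t)" for t
  proof -
    have "(g has_real_derivative (2 * p1 (2 * t) / p (2 * t) + -2 * q1 (-2 * t) / q (-2 * t)) / 2) (at t)"
      unfolding g by (intro DERIV_cdivide DERIV_add DERIV_ln_comp_scale dp dq pos)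
    then show ?thesis unfolding g'_def by (rule DERIV_cong) (simp add: field_simps)
  qed
  then have deriv_g: "deriv g = g'" using DERIV_imp_deriv by blast
  have "(g' has_real_derivative
      2 * (p2 0 / p 0 - (p1 0)\<^sup>2 / (p 0)\<^sup>2) + 2 * (q2 0 / q 0 - (q1 0)\<^sup>2 / (q 0)\<^sup>2)) (at 0)"
  proof -
    have "(g' has_real_derivative 2 * (p2 (2 * 0) / p (2 * 0) - (p1 (2 * 0))\<^sup>2 / (p (2 * 0))\<^sup>2)
        - -2 * (q2 (-2 * 0) / q (-2 * 0) - (q1 (-2 * 0))\<^sup>2 / (q (-2 * 0))\<^sup>2)) (at 0)"
      unfolding g'_def by (intro DERIV_diff DERIV_log_deriv_comp_scale dp dp1 dq dq1 pos)
    then show ?thesis by (rule DERIV_cong) simp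
  qed
  then show ?thesis
    using dg deriv_g DERIV_imp_deriv real_differentiable_def by metis
qed

lemma gram_mexp_mult:
  fixes B :: "complex^'n^'m" and H :: "complex^'m^'m"
  assumes "hermitian H"
  shows "(mexp (t *\<^sub>R H) ** B) ** ctransp (mexp (t *\<^sub>R H) ** B)
    = mexp (t *\<^sub>R H) ** (B ** ctransp B) ** mexp (t *\<^sub>R H)"
  using hermitian_mexp_scaleR[OF assms] unfolding hermitian_def
  by (simp add: ctransp_matrix_mult matrix_mul_assoc)

lemma Re_trace_sandwich_mexp:
  "Re (trace (mexp (t *\<^sub>R H) ** M ** mexp (t *\<^sub>R H))) = trace_exp H M (2 * t)"
proof -
  have "trace (mexp (t *\<^sub>R H) ** M ** mexp (t *\<^sub>R H))
      = trace (mexp (t *\<^sub>R H) ** mexp (t *\<^sub>R H) ** M)"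
    using trace_mul_sym[of "mexp (t *\<^sub>R H) ** M"] by (simp add: matrix_mul_assoc)
  moreover have "mexp (t *\<^sub>R H) ** mexp (t *\<^sub>R H) = mexp ((2 * t) *\<^sub>R H)"
    using mexp_scaleR_add[of t H t] by (simp only: mult_2)
  ultimately show ?thesis
    unfolding trace_exp_def by simp
qed

lemma matrix_inv_sandwich_mexp:
  fixes M H :: "complex^'m^'m"
  assumes "invertible M"
  shows "matrix_inv (mexp (t *\<^sub>R H) ** M ** mexp (t *\<^sub>R H))
    = mexp ((- t) *\<^sub>R H) ** matrix_inv M ** mexp ((- t) *\<^sub>R H)"
proof (rule matrix_inv_eqI)
  let ?E = "mexp (t *\<^sub>R H)" and ?F = "mexp ((- t) *\<^sub>R H)"
  have EF: "X ** ?E ** ?F = X" for X :: "complex^'m^'m"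
    by (metis mexp_scaleR_minus matrix_mul_assoc matrix_mul_rid)
  have MM: "X ** M ** matrix_inv M = X" for X :: "complex^'m^'m"
    by (metis matrix_inv_right[OF assms] matrix_mul_assoc matrix_mul_rid)
  show "?E ** M ** ?E ** (?F ** matrix_inv M ** ?F) = mat 1"
    by (simp add: matrix_mul_assoc EF MM mexp_scaleR_minus del: scaleR_minus_left)
qed

lemma kappaF_mexp_mult:
  fixes B :: "complex^'n^'m" and H :: "complex^'m^'m"
  assumes hH: "hermitian H" and inv: "invertible (B ** ctransp B)"
  defines "P \<equiv> B ** ctransp B"
  shows "invertible ((mexp (t *\<^sub>R H) ** B) ** ctransp (mexp (t *\<^sub>R H) ** B))"
    and "ln (kappaF (mexp (t *\<^sub>R H) ** B))
      = (ln (trace_exp H P (2 * t)) + ln (trace_exp H (matrix_inv P) (-2 * t))) / 2"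
    and "trace_exp H P (2 * t) > 0" and "trace_exp H (matrix_inv P) (-2 * t) > 0"
proof -
  let ?B = "mexp (t *\<^sub>R H) ** B"
  note gram = gram_mexp_mult[OF hH, of t B]
  show inv': "invertible (?B ** ctransp ?B)"
    unfolding gram
    by (rule invertible_mult[OF invertible_mult[OF invertible_mexp_scaleR inv] invertible_mexp_scaleR])
  have tr: "Re (trace (?B ** ctransp ?B)) = trace_exp H P (2 * t)"
    unfolding gram P_def by (rule Re_trace_sandwich_mexp)
  have tr_inv: "Re (trace (matrix_inv (?B ** ctransp ?B))) = trace_exp H (matrix_inv P) (-2 * t)"
    unfolding gram P_def matrix_inv_sandwich_mexp[OF inv]
    using Re_trace_sandwich_mexp[of "- t" H] by simp
  show "ln (kappaF ?B) = (ln (trace_exp H P (2 * t)) + ln (trace_exp H (matrix_inv P) (-2 * t))) / 2"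
    using ln_kappaF[OF inv'] by (simp only: tr tr_inv)
  show "trace_exp H P (2 * t) > 0" "trace_exp H (matrix_inv P) (-2 * t) > 0"
    using Re_trace_gram_pos[OF inv'] Re_trace_gram_inv_pos[OF inv'] by (simp_all only: tr tr_inv)
qed

lemma hess_form_eq_trace_variance:
  fixes A :: "complex^'n^'m" and X H :: "complex^'m^'m"
  assumes hH: "hermitian H" and inv: "invertible (X ** A ** ctransp A ** ctransp X)"
  defines "P \<equiv> X ** A ** ctransp A ** ctransp X"
    and "g \<equiv> \<lambda>t::real. CA A (mexp (t *\<^sub>R H) ** X)"
  shows "(\<forall>t. g differentiable (at t)) \<and> deriv g differentiable (at 0) \<and>
    hess_form A X H = 2 * trace_variance P H + 2 * trace_variance (matrix_inv P) H"
proof -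
  have PB: "(X ** A) ** ctransp (X ** A) = P"
    unfolding P_def by (simp add: ctransp_matrix_mult matrix_mul_assoc)
  note flow = kappaF_mexp_mult[OF hH inv[folded P_def, folded PB], unfolded PB]
  have "g t = (ln (trace_exp H P (2 * t)) + ln (trace_exp H (matrix_inv P) (-2 * t))) / 2" for t
    unfolding g_def CA_def matrix_mul_assoc[symmetric] by (rule flow(2))
  then have g: "g = (\<lambda>t. (ln (trace_exp H P (2 * t)) + ln (trace_exp H (matrix_inv P) (-2 * t))) / 2)" ..
  have pos: "trace_exp H P s > 0" "trace_exp H (matrix_inv P) s > 0" for s
    using flow(3)[of "s / 2"] flow(4)[of "- s / 2"] by simp_all
  note d = has_real_derivative_trace_exp[of H]
  have "(\<forall>t. g differentiable (at t)) \<and> deriv g differentiable (at 0) \<and>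
      deriv (deriv g) 0 = 2 * (trace_exp H (H ** (H ** P)) 0 / trace_exp H P 0
          - (trace_exp H (H ** P) 0)\<^sup>2 / (trace_exp H P 0)\<^sup>2)
        + 2 * (trace_exp H (H ** (H ** matrix_inv P)) 0 / trace_exp H (matrix_inv P) 0
          - (trace_exp H (H ** matrix_inv P) 0)\<^sup>2 / (trace_exp H (matrix_inv P) 0)\<^sup>2)"
    by (rule second_deriv_half_log_sum[OF d d d d pos g])
  then show ?thesis
    unfolding hess_form_def g_def[symmetric] trace_variance_def trace_exp_0 matrix_mul_assoc .
qed

lemma of_real_trace_variance:
  assumes hH: "hermitian H" and hM: "hermitian M"
  shows "complex_of_real (trace_variance M H)
    = trace (H ** H ** M) / trace M - (trace (H ** M))\<^sup>2 / (trace M)\<^sup>2"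
proof -
  obtain a b c where "trace (H ** H ** M) = of_real a" "trace (H ** M) = of_real b"
      "trace M = of_real c"
    using trace_mult_real_if_hermitian[OF hermitian_mult_self[OF hH] hM]
      trace_mult_real_if_hermitian[OF hH hM] trace_real_if_hermitian[OF hM] by metis
  then show ?thesis unfolding trace_variance_def by simp
qed

lemma hess_form_half_eq_traces:
  fixes A :: "complex^'n^'m" and X H :: "complex^'m^'m"
  assumes hH: "hermitian H" and inv: "invertible (X ** A ** ctransp A ** ctransp X)"
  defines "P \<equiv> X ** A ** ctransp A ** ctransp X"
  shows "complex_of_real (hess_form A X H / 2) =
    trace (H ** H ** P) / trace P - (trace (H ** P))\<^sup>2 / (trace P)\<^sup>2
    + trace (H ** H ** matrix_inv P) / trace (matrix_inv P)
    - (trace (H ** matrix_inv P))\<^sup>2 / (trace (matrix_inv P))\<^sup>2"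
proof -
  have hP: "hermitian P"
    using hermitian_gram[of "X ** A"] unfolding P_def by (simp add: ctransp_matrix_mult matrix_mul_assoc)
  have "hess_form A X H / 2 = trace_variance P H + trace_variance (matrix_inv P) H"
    using hess_form_eq_trace_variance[OF hH inv] unfolding P_def by simp
  then show ?thesis
    using of_real_trace_variance[OF hH hP]
      of_real_trace_variance[OF hH hermitian_matrix_inv[OF inv[folded P_def] hP]]
    by simp
qed

lemma hess_form_ge:
  fixes A :: "complex^'n^'m" and X H :: "complex^'m^'m"
  assumes hH: "hermitian H" and trH: "trace H = 0"
    and inv: "invertible (X ** A ** ctransp A ** ctransp X)"
  shows "hess_form A X H \<ge> 4 * Re (trace (H ** H)) / (kappaF (X ** A))\<^sup>2"
proof -
  have PB: "(X ** A) ** ctransp (X ** A) = X ** A ** ctransp A ** ctransp X"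
    by (simp add: ctransp_matrix_mult matrix_mul_assoc)
  note invB = inv[folded PB]
  have "4 * Re (trace (H ** H)) / (kappaF (X ** A))\<^sup>2
      = 2 * (Re (trace (H ** H)) / (Re (trace ((X ** A) ** ctransp (X ** A)))
               * Re (trace (matrix_inv ((X ** A) ** ctransp (X ** A))))))
        + 2 * (Re (trace (H ** H)) / (Re (trace ((X ** A) ** ctransp (X ** A)))
               * Re (trace (matrix_inv ((X ** A) ** ctransp (X ** A))))))"
    unfolding kappaF_sq[OF invB] by simp
  also have "\<dots> \<le> hess_form A X H"
    using trace_variance_ge[OF invB hH trH] trace_variance_inv_ge[OF invB hH trH]
      hess_form_eq_trace_variance[OF hH inv]
    unfolding PB by linarith
  finally show ?thesis .
qed

lemma trace_eq_0_if_iLie: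
  assumes "G \<subseteq> SL" and "H \<in> iLie G"
  shows "trace H = 0"
  using assms by (intro trace_eq_0_if_det_mexp_eq_1) (auto simp: iLie_def SL_def)

lemma hessian_eigenvalue_ge:
  fixes A :: "complex^'n^'m" and X H :: "complex^'m^'m"
  assumes GSL: "G \<subseteq> SL" and inv: "invertible (X ** A ** ctransp A ** ctransp X)"
    and L: "is_hessian G A X L" and H: "H \<in> iLie G" "H \<noteq> 0" and eigen: "L H = lam *\<^sub>R H"
  shows "lam \<ge> 4 / (kappaF (X ** A))\<^sup>2"
proof -
  have hH: "hermitian H" using H(1) by (simp add: iLie_def)
  have norm_H: "Re (trace (H ** H)) > 0"
    using frob_pos[OF H(2)] frob_sq_hermitian[OF hH] by (metis zero_less_power2 less_irrefl)
  have "minner H (L H) = lam * Re (trace (H ** H))"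
    using hH unfolding eigen minner_def hermitian_def
    by (simp add: matrix_scalar_ac scalar_matrix_assoc[symmetric] trace_scaleR)
  moreover have "minner H (L H) = hess_form A X H"
    using L H(1) unfolding is_hessian_def by blast
  ultimately have "4 / (kappaF (X ** A))\<^sup>2 * Re (trace (H ** H)) \<le> lam * Re (trace (H ** H))"
    using hess_form_ge[OF hH trace_eq_0_if_iLie[OF GSL H(1)] inv] by simp
  then show ?thesis
    using norm_H by (rule mult_right_le_imp_le)
qed

lemma invertible_gram_mult:
  fixes A :: "complex^'n^'m" and X :: "complex^'m^'m"
  assumes "invertible X" and "invertible (A ** ctransp A)"
  shows "invertible (X ** A ** ctransp A ** ctransp X)"
  using invertible_mult[OF invertible_mult[OF assms] invertible_ctransp[OF assms(1)]]
  by (simp add: matrix_mul_assoc)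

lemma kappaF_bounds_if_CA_le:
  fixes A :: "complex^'n^'m" and X :: "complex^'m^'m"
  assumes "CA A X \<le> CA A (mat 1)"
    and "invertible (X ** A ** ctransp A ** ctransp X)" and "invertible (A ** ctransp A)"
  shows "0 < kappaF (X ** A)" and "kappaF (X ** A) \<le> kappaF A"
proof -
  have "invertible ((X ** A) ** ctransp (X ** A))"
    using assms(2) by (simp add: ctransp_matrix_mult matrix_mul_assoc)
  then show pos: "0 < kappaF (X ** A)" by (rule kappaF_pos)
  show "kappaF (X ** A) \<le> kappaF A"
    using assms(1) pos kappaF_pos[OF assms(3)] unfolding CA_def by simp
qed

theorem mainTheorem10:
  fixes A :: "complex^'n^'m" and G :: "(complex^'m^'m) set"
  assumes mn: "CARD('m) \<le> CARD('n)"
    and rkA: "rank A = CARD('m)"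
    and symG: "symmetric_subgroup G"
  shows "(\<forall>X\<in>G. \<forall>H\<in>iLie G.
            let P = X ** A ** ctransp A ** ctransp X;
                Pi = matrix_inv P;
                g = (\<lambda>t::real. CA A (mexp (t *\<^sub>R H) ** X))
            in (\<forall>t. g differentiable (at t)) \<and> (deriv g) differentiable (at 0) \<and>
               complex_of_real (hess_form A X H / 2) =
                 trace (H ** H ** P) / trace P - (trace (H ** P))\<^sup>2 / (trace P)\<^sup>2
               + trace (H ** H ** Pi) / trace Pi - (trace (H ** Pi))\<^sup>2 / (trace Pi)\<^sup>2)
       \<and> (\<forall>X\<in>G. CA A X \<le> CA A (mat 1) \<longrightarrow>
            (\<forall>L. is_hessian G A X L \<longrightarrow>
               (\<forall>(lam::real) H. H \<in> iLie G \<and> H \<noteq> 0 \<and> L H = lam *\<^sub>R H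
                   \<longrightarrow> lam \<ge> 4 / (kappaF A)\<^sup>2)))"
proof -
  have GSL: "G \<subseteq> SL"
    using symG by (simp add: symmetric_subgroup_def is_subgroup_SL_def)
  have invA: "invertible (A ** ctransp A)"
    using full_row_rank_right_inverse[OF rkA] invertible_gram_if_right_inverse by blast
  have invP: "invertible (X ** A ** ctransp A ** ctransp X)" if "X \<in> G" for X
  proof (rule invertible_gram_mult[OF _ invA])
    show "invertible X" using that GSL by (auto simp: SL_def invertible_det_nz)
  qed
  show ?thesis
    unfolding Let_def
  proof ((rule conjI; intro ballI allI impI), goal_cases)
    case (1 X H)
    then have "hermitian H" by (simp add: iLie_def)
    then show ?case
      using hess_form_eq_trace_variance hess_form_half_eq_traces invP[OF 1(1)] by blast
  next
    case (2 X L lam H)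
    note kappa = kappaF_bounds_if_CA_le[OF 2(2) invP[OF 2(1)] invA]
    have "4 / (kappaF A)\<^sup>2 \<le> 4 / (kappaF (X ** A))\<^sup>2"
      using kappa by (intro divide_left_mono power_mono) auto
    also have "\<dots> \<le> lam"
      using hessian_eigenvalue_ge[OF GSL invP[OF 2(1)] 2(3)] 2(4) by blast
    finally show ?case .
  qed
qed

end
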